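(* For every modulo predicate $\psi:\mathbb{N}^{\Sigma}\to\{0,1\}$, i.e. a predicate for which there exist $\mathbf{a}\in\mathbb{Z}^{\Sigma}$, $b\in\mathbb{Z}$ and $m\in\mathbb{Z}_{>0}$ with $\psi(\mathbf{x})=1\iff\mathbf{a}\cdot\mathbf{x}\equiv b\pmod m$, there exists a leaderless CRD that haltingly decides $\psi$ (under a weakly fair scheduler) whose halting runtime is $O(n)$.
   Context: CRN model: $\Pi=(\mathcal{S},\mathcal{R})$, finite species set, finite reaction set $\mathcal{R}\subset\mathbb{N}^{\mathcal{S}}\times\mathbb{N}^{\mathcal{S}}$; reactions $(\mathbf{r},\mathbf{p})$ with $\|\mathbf{r}\|_1\in\{1,2\}$, $\|\mathbf{r}\|_1\le\|\mathbf{p}\|_1$; every $\mathbf{r}$ with $1\le\|\mathbf{r}\|_1\le2$ has a nonempty set $\mathcal{R}(\mathbf{r})$ of reactions; void reactions ($\mathbf{r}=\mathbf{p}$) alone in their $\mathcal{R}(\mathbf{r})$; $\operatorname{NV}(\mathcal{R})$ non-void; finite density. Configurations $\mathbf{c}\in\mathbb{N}^{\mathcal{S}}$, $\|\mathbf{c}\|_1\ge1$; applicability $\mathbf{r}\le\mathbf{c}$, result $\mathbf{c}-\mathbf{r}+\mathbf{p}$; reachability $\stackrel{*}{\rightharpoonup}$; $\mathrm{halt}(Z)=\{\mathbf{c}\in Z:\mathbf{c}\stackrel{*}{\rightharpoonup}\mathbf{c}'\Rightarrow\mathbf{c}'=\mathbf{c}\}$. Weakly fair execution $\langle\mathbf{c}^t,\alpha^t\rangle$: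 every reaction applicable at step $t$ is later scheduled or becomes inapplicable. Halts into $Z$ at the first $t$ with $\mathbf{c}^t\in\mathrm{halt}(Z)$. CRD: input species $\Sigma\subset\mathcal{S}$, disjoint voters $\Upsilon_0,\Upsilon_1$, fuel $F\in\mathcal{S}\setminus\Sigma$, context $\mathbf{k}$ (leaderless: $\mathbf{k}=\mathbf{0}$); valid initial configurations agree with $\mathbf{k}$ off $\Sigma\cup\{F\}$ and have $\mathbf{c}^0(F)\ge1$; $\mathcal{D}_v=\{\mathbf{c}:\mathbf{c}(\Upsilon_v)>0,\mathbf{c}(\Upsilon_{1-v})=0\}$; $\Pi$ haltingly decides $\psi$ if for every $\mathbf{x}\in\mathbb{N}^{\Sigma}$, every weakly fair execution from every valid $\mathbf{c}^0$ with $\mathbf{c}^0|_\Sigma=\mathbf{x}$ halts into $\mathcal{D}_{\psi(\mathbf{x})}$. Runtime: stochastic scheduler with volume $\varphi=\Theta(n)$, $n=\|\mathbf{c}^0\|_1$; propensity $\pi_{\mathbf{c}}(\alpha)=\mathbf{c}(A)/|\mathcal{R}(\mathbf{r})|$ ($\mathbf{r}=A$), $\frac1\varphi\binom{\mathbf{c}(A)}2/|\mathcal{R}(\mathbf{r})|$ ($\mathbf{r}=2A$), $\frac1\varphi\mathbf{c}(A)\mathbf{c}(B)/|\mathcal{R}(\mathbf{r})|$ ($\mathbf{r}=A+B$); step time span $1/\pi_{\mathbf{c}}(\mathcal{R})$. $\tau(\eta,t,Q)$ = least $s>t$ with $\alpha^{s-1}\in Q$ or every reaction of $Q$ inapplicable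 at some step in $[t,s]$. Runtime policy $\varrho(\mathbf{c})\subseteq\operatorname{NV}(\mathcal{R})$; skipping policy $\sigma(t)\ge t$; rounds $t(0)=0$, $t_e(i)=\sigma(t(i))$, $\mathbf{e}^i=\mathbf{c}^{t_e(i)}$, $t(i+1)=\tau(\eta,t_e(i),\varrho(\mathbf{e}^i))$; $\operatorname{TC}^{\varrho}(\mathbf{c})$ = expected total time span of the steps before $\tau(\eta_r,0,\varrho(\mathbf{c}))$ of a stochastic execution $\eta_r$ from $\mathbf{c}$; $\operatorname{RT}_{\mathrm{halt}}^{\varrho,\sigma}(\eta)=\sum_{i<i^*}\operatorname{TC}^{\varrho}(\mathbf{e}^i)$ with $i^*=\min\{i:t(i)\ge t^*\}$, $t^*$ the halting step; halting runtime $\operatorname{RT}_{\mathrm{halt}}^{\Pi}(n)=\min_\varrho\max_{\eta,\sigma}\operatorname{RT}_{\mathrm{halt}}^{\varrho,\sigma}(\eta)$ over weakly fair executions from valid initial configurations of molecular count $n$ and all skipping policies. *)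

theory Defs
  imports Complex_Main "HOL-Library.Landau_Symbols" "HOL-Library.Extended_Nonnegative_Real"
begin

text \<open>Species are natural numbers; a vector in N^S is a function nat => nat
  vanishing outside the finite species set S.\<close>

type_synonym conf = "nat \<Rightarrow> nat"
type_synonym reaction = "conf \<times> conf"

definition supp_in :: "nat set \<Rightarrow> conf \<Rightarrow> bool" where
  "supp_in S c \<longleftrightarrow> (\<forall>s. s \<notin> S \<longrightarrow> c s = 0)"

definition csize :: "nat set \<Rightarrow> conf \<Rightarrow> nat" where
  "csize S c = (\<Sum>s\<in>S. c s)"

definition is_conf :: "nat set \<Rightarrow> conf \<Rightarrow> bool" where
  "is_conf S c \<longleftrightarrow> supp_in S c \<and> csize S c \<ge> 1"

definition Rof :: "reaction set \<Rightarrow> conf \<Rightarrow> reaction set" where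
  "Rof R r = {\<alpha> \<in> R. fst \<alpha> = r}"

definition NV :: "reaction set \<Rightarrow> reaction set" where
  "NV R = {\<alpha> \<in> R. fst \<alpha> \<noteq> snd \<alpha>}"

definition applicable :: "reaction \<Rightarrow> conf \<Rightarrow> bool" where
  "applicable \<alpha> c \<longleftrightarrow> (\<forall>s. fst \<alpha> s \<le> c s)"

definition apply_r :: "reaction \<Rightarrow> conf \<Rightarrow> conf" where
  "apply_r \<alpha> c = (\<lambda>s. c s - fst \<alpha> s + snd \<alpha> s)"

definition step :: "reaction set \<Rightarrow> conf \<Rightarrow> conf \<Rightarrow> bool" where
  "step R c c' \<longleftrightarrow> (\<exists>\<alpha>\<in>R. applicable \<alpha> c \<and> c' = apply_r \<alpha> c)"

definition reach :: "reaction set \<Rightarrow> conf \<Rightarrow> conf \<Rightarrow> bool" where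
  "reach R = (step R)\<^sup>*\<^sup>*"

definition halt :: "reaction set \<Rightarrow> conf set \<Rightarrow> conf set" where
  "halt R Z = {c \<in> Z. \<forall>c'. reach R c c' \<longrightarrow> c' = c}"

definition finite_density :: "nat set \<Rightarrow> reaction set \<Rightarrow> bool" where
  "finite_density S R \<longleftrightarrow>
     (\<exists>K::nat. \<forall>c0 c. is_conf S c0 \<and> reach R c0 c \<longrightarrow> csize S c \<le> K * csize S c0)"

definition crn :: "nat set \<Rightarrow> reaction set \<Rightarrow> bool" where
  "crn S R \<longleftrightarrow> finite S \<and> finite R \<and>
     (\<forall>(r, p)\<in>R. supp_in S r \<and> supp_in S p \<and> csize S r \<in> {1, 2} \<and> csize S r \<le> csize S p) \<and>
     (\<forall>r. supp_in S r \<and> 1 \<le> csize S r \<and> csize S r \<le> 2 \<longrightarrow> Rof R r \<noteq> {}) \<and>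
     (\<forall>(r, p)\<in>R. r = p \<longrightarrow> Rof R r = {(r, p)}) \<and>
     finite_density S R"

text \<open>Chemical reaction decider (species S, reactions R, input species Sig,
  voters Y0, Y1, fuel F); leaderless means context k = 0.\<close>
definition crd :: "nat set \<Rightarrow> reaction set \<Rightarrow> nat set \<Rightarrow> nat set \<Rightarrow> nat set \<Rightarrow> nat \<Rightarrow> bool" where
  "crd S R Sig Y0 Y1 F \<longleftrightarrow> crn S R \<and> Sig \<subseteq> S \<and> Y0 \<subseteq> S \<and> Y1 \<subseteq> S \<and> Y0 \<inter> Y1 = {} \<and>
     F \<in> S - Sig"

definition valid_init :: "nat set \<Rightarrow> nat set \<Rightarrow> nat \<Rightarrow> conf \<Rightarrow> bool" where
  "valid_init S Sig F c0 \<longleftrightarrow> is_conf S c0 \<and> (\<forall>s. s \<notin> Sig \<and> s \<noteq> F \<longrightarrow> c0 s = 0) \<and> c0 F \<ge> 1"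

definition restrict_to :: "nat set \<Rightarrow> conf \<Rightarrow> conf" where
  "restrict_to Sig c = (\<lambda>s. if s \<in> Sig then c s else 0)"

definition D :: "nat set \<Rightarrow> nat set \<Rightarrow> bool \<Rightarrow> conf set" where
  "D Y0 Y1 v = (let Yv = (if v then Y1 else Y0); Yo = (if v then Y0 else Y1) in
      {c. (\<Sum>s\<in>Yv. c s) > 0 \<and> (\<Sum>s\<in>Yo. c s) = 0})"

definition execution :: "reaction set \<Rightarrow> (nat \<Rightarrow> conf) \<Rightarrow> (nat \<Rightarrow> reaction) \<Rightarrow> bool" where
  "execution R cs as \<longleftrightarrow>
     (\<forall>t. as t \<in> R \<and> applicable (as t) (cs t) \<and> cs (Suc t) = apply_r (as t) (cs t))"

definition weakly_fair :: "reaction set \<Rightarrow> (nat \<Rightarrow> conf) \<Rightarrow> (nat \<Rightarrow> reaction) \<Rightarrow> bool" where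
  "weakly_fair R cs as \<longleftrightarrow>
     (\<forall>t. \<forall>\<alpha>\<in>R. applicable \<alpha> (cs t) \<longrightarrow> (\<exists>s\<ge>t. as s = \<alpha> \<or> \<not> applicable \<alpha> (cs s)))"

definition halts_into :: "reaction set \<Rightarrow> conf set \<Rightarrow> (nat \<Rightarrow> conf) \<Rightarrow> bool" where
  "halts_into R Z cs \<longleftrightarrow> (\<exists>t. cs t \<in> halt R Z)"

definition halting_decides ::
  "nat set \<Rightarrow> reaction set \<Rightarrow> nat set \<Rightarrow> nat set \<Rightarrow> nat set \<Rightarrow> nat \<Rightarrow> (conf \<Rightarrow> bool) \<Rightarrow> bool" where
  "halting_decides S R Sig Y0 Y1 F \<psi> \<longleftrightarrow>
     (\<forall>x. supp_in Sig x \<longrightarrow> (\<forall>c0 cs as.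
        valid_init S Sig F c0 \<and> restrict_to Sig c0 = x \<and> cs 0 = c0 \<and>
        execution R cs as \<and> weakly_fair R cs as \<longrightarrow> halts_into R (D Y0 Y1 (\<psi> x)) cs))"

definition modulo_predicate :: "nat set \<Rightarrow> (conf \<Rightarrow> bool) \<Rightarrow> bool" where
  "modulo_predicate Sig \<psi> \<longleftrightarrow>
     (\<exists>(a::nat \<Rightarrow> int) (b::int) (m::int). m > 0 \<and>
        (\<forall>x. supp_in Sig x \<longrightarrow> (\<psi> x \<longleftrightarrow> (\<Sum>s\<in>Sig. a s * int (x s)) mod m = b mod m)))"

definition propensity :: "real \<Rightarrow> nat set \<Rightarrow> reaction set \<Rightarrow> conf \<Rightarrow> reaction \<Rightarrow> real" where
  "propensity V S R c \<alpha> =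
     (if csize S (fst \<alpha>) = 1 then 1 else 1 / V) *
     (\<Prod>s\<in>S. real (c s choose fst \<alpha> s)) / real (card (Rof R (fst \<alpha>)))"

definition totprop :: "real \<Rightarrow> nat set \<Rightarrow> reaction set \<Rightarrow> conf \<Rightarrow> real" where
  "totprop V S R c = (\<Sum>\<alpha>\<in>R. propensity V S R c \<alpha>)"

definition stopcond :: "reaction set \<Rightarrow> (nat \<Rightarrow> conf) \<Rightarrow> (nat \<Rightarrow> reaction) \<Rightarrow> nat \<Rightarrow> nat \<Rightarrow> bool" where
  "stopcond Q cs as t s \<longleftrightarrow> t < s \<and>
     (as (s - 1) \<in> Q \<or> (\<forall>\<alpha>\<in>Q. \<exists>u. t \<le> u \<and> u \<le> s \<and> \<not> applicable \<alpha> (cs u)))"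

definition tau :: "reaction set \<Rightarrow> (nat \<Rightarrow> conf) \<Rightarrow> (nat \<Rightarrow> reaction) \<Rightarrow> nat \<Rightarrow> nat" where
  "tau Q cs as t = (LEAST s. stopcond Q cs as t s)"

fun path_conf :: "conf \<Rightarrow> reaction list \<Rightarrow> nat \<Rightarrow> conf" where
  "path_conf c xs 0 = c"
| "path_conf c xs (Suc i) = apply_r (xs ! i) (path_conf c xs i)"

definition path_prob :: "real \<Rightarrow> nat set \<Rightarrow> reaction set \<Rightarrow> conf \<Rightarrow> reaction list \<Rightarrow> real" where
  "path_prob V S R c xs =
     (\<Prod>i<length xs. propensity V S R (path_conf c xs i) (xs ! i) / totprop V S R (path_conf c xs i))"

text \<open>TC^rho(c): expected total time span of the steps t < tau(eta_r, 0, Q) of a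
  stochastic execution from c, Q = rho(c); written as the sum over t of the
  expectation of (time span of step t) * [t < tau].\<close>
definition TC :: "real \<Rightarrow> nat set \<Rightarrow> reaction set \<Rightarrow> (conf \<Rightarrow> reaction set) \<Rightarrow> conf \<Rightarrow> ennreal" where
  "TC V S R \<rho> c = (\<Sum>t. \<Sum>xs\<in>{xs. set xs \<subseteq> R \<and> length xs = t}.
      (if \<not> (\<exists>s. s \<le> t \<and> stopcond (\<rho> c) (path_conf c xs) (\<lambda>i. xs ! i) 0 s)
       then ennreal (path_prob V S R c xs) * ennreal (1 / totprop V S R (path_conf c xs t))
       else 0))"

primrec rounds :: "(nat \<Rightarrow> nat) \<Rightarrow> (nat \<Rightarrow> nat) \<Rightarrow> nat \<Rightarrow> nat" where
  "rounds f \<sigma> 0 = 0"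
| "rounds f \<sigma> (Suc i) = f (\<sigma> (rounds f \<sigma> i))"

definition halting_step :: "reaction set \<Rightarrow> conf set \<Rightarrow> (nat \<Rightarrow> conf) \<Rightarrow> enat" where
  "halting_step R Z cs = (if \<exists>t. cs t \<in> halt R Z then enat (LEAST t. cs t \<in> halt R Z) else \<infinity>)"

definition RT_exec ::
  "real \<Rightarrow> nat set \<Rightarrow> reaction set \<Rightarrow> (conf \<Rightarrow> reaction set) \<Rightarrow> (nat \<Rightarrow> nat) \<Rightarrow> conf set
   \<Rightarrow> (nat \<Rightarrow> conf) \<Rightarrow> (nat \<Rightarrow> reaction) \<Rightarrow> ennreal" where
  "RT_exec V S R \<rho> \<sigma> Z cs as =
     (let tr = rounds (\<lambda>te. tau (\<rho> (cs te)) cs as te) \<sigma> in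
      (\<Sum>i. if enat (tr i) < halting_step R Z cs then TC V S R \<rho> (cs (\<sigma> (tr i))) else 0))"

definition RT_halt ::
  "(nat \<Rightarrow> real) \<Rightarrow> nat set \<Rightarrow> reaction set \<Rightarrow> nat set \<Rightarrow> nat set \<Rightarrow> nat set \<Rightarrow> nat
   \<Rightarrow> (conf \<Rightarrow> bool) \<Rightarrow> nat \<Rightarrow> ennreal" where
  "RT_halt \<phi> S R Sig Y0 Y1 F \<psi> n =
     (INF \<rho>\<in>{\<rho>. \<forall>c. \<rho> c \<subseteq> NV R}.
        SUP (cs, as, \<sigma>)\<in>{(cs, as, \<sigma>). valid_init S Sig F (cs 0) \<and> csize S (cs 0) = n \<and>
               execution R cs as \<and> weakly_fair R cs as \<and> (\<forall>t. \<sigma> t \<ge> t)}.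
          RT_exec (\<phi> n) S R \<rho> \<sigma> (D Y0 Y1 (\<psi> (restrict_to Sig (cs 0)))) cs as)"

end

(* Every input molecule s becomes a residue molecule res (a s mod m), the fuel becomes res 0,
   and two residue molecules res i, res j merge into res ((i + j) mod m) plus a waste molecule.
   Along any run the residues, summed over all molecules (inputs weighted by a), stay congruent
   to a.x modulo m; some non-waste molecule always survives; and every non-void reaction lowers
   the potential (2 per input or fuel molecule, 1 per residue molecule) by one. So every fair
   run becomes quiescent, and a quiescent configuration holds exactly one residue molecule,
   whose residue is a.x mod m and which is the only voter.

   For the runtime the policy takes all non-void reactions. A round starting with input or fuel
   present ends within expected time |R|. A round starting with p >= 2 residue molecules only
   has, by pigeonhole, a residue species with at least p/m molecules, so some merge has
   propensity at least p (p - 1) / (4 m^2 V |R|). Before halting the potential strictly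
   decreases from round to round and starts at most at 2n, so the telescoping sum of
   1 / (p (p - 1)) bounds the total by O(n + V) = O(n). *)

theory Submission
  imports Defs
begin

lemma propensity_nonneg: "V > 0 \<Longrightarrow> 0 \<le> propensity V S R c \<alpha>"
  unfolding propensity_def by (auto intro!: divide_nonneg_nonneg mult_nonneg_nonneg prod_nonneg)

lemma propensity_eq_0_if_not_applicable:
  assumes "finite S" "supp_in S (fst \<alpha>)" "\<not> applicable \<alpha> c"
  shows "propensity V S R c \<alpha> = 0"
proof -
  obtain s where s: "c s < fst \<alpha> s" using assms(3) unfolding applicable_def by (auto simp: not_le)
  then have "s \<in> S" using assms(2) unfolding supp_in_def by (metis gr_implies_not0)
  then have "(\<Prod>s\<in>S. real (c s choose fst \<alpha> s)) = 0"
    using s assms(1) by (intro prod_zero) (auto intro!: bexI[of _ s])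
  then show ?thesis unfolding propensity_def by simp
qed

lemma propensity_le_totprop:
  "V > 0 \<Longrightarrow> finite R \<Longrightarrow> \<alpha> \<in> R \<Longrightarrow> propensity V S R c \<alpha> \<le> totprop V S R c"
  unfolding totprop_def by (intro member_le_sum propensity_nonneg)

lemma sum_words_prod_eq_power:
  fixes h :: "'a \<Rightarrow> real"
  assumes "finite A"
  shows "(\<Sum>xs\<in>{xs. set xs \<subseteq> A \<and> length xs = t}. \<Prod>i<t. h (xs ! i)) = sum h A ^ t"
proof (induction t)
  case 0
  have "{xs. set xs \<subseteq> A \<and> length xs = 0} = {[]}" by auto
  then show ?case by simp
next
  case (Suc t)
  let ?W = "\<lambda>t. {xs. set xs \<subseteq> A \<and> length xs = t}"
  have W_Suc: "?W (Suc t) = (\<lambda>(x, xs). x # xs) ` (A \<times> ?W t)"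
    by (auto simp: image_iff length_Suc_conv)
  have inj: "inj_on (\<lambda>(x, xs). x # xs) (A \<times> ?W t)" by (auto simp: inj_on_def)
  have "(\<Sum>xs\<in>?W (Suc t). \<Prod>i<Suc t. h (xs ! i))
      = (\<Sum>(x, xs)\<in>A \<times> ?W t. h x * (\<Prod>i<t. h (xs ! i)))"
    unfolding W_Suc
    by (subst sum.reindex[OF inj]) (simp add: case_prod_beta prod.lessThan_Suc_shift del: prod.lessThan_Suc)
  also have "\<dots> = (\<Sum>x\<in>A. h x * (\<Sum>xs\<in>?W t. \<Prod>i<t. h (xs ! i)))"
    by (simp add: sum.cartesian_product[symmetric] sum_distrib_left)
  also have "\<dots> = sum h A ^ Suc t" by (simp add: Suc.IH sum_distrib_right)
  finally show ?case .
qed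

lemma apply_r_void: "applicable (r, r) c \<Longrightarrow> apply_r (r, r) c = c"
  unfolding applicable_def apply_r_def by auto

lemma path_conf_void_prefix:
  "\<forall>j<i. fst (xs ! j) = snd (xs ! j) \<and> applicable (xs ! j) c \<Longrightarrow> path_conf c xs i = c"
proof (induction i)
  case (Suc i)
  then show ?case using apply_r_void[of "fst (xs ! i)" c] by (cases "xs ! i") auto
qed simp

lemma void_path_prob_eq_0_or_const:
  assumes "finite S" "\<forall>\<alpha>\<in>set xs. supp_in S (fst \<alpha>) \<and> fst \<alpha> = snd \<alpha>"
  shows "path_prob V S R c xs = 0 \<or> (\<forall>i\<le>length xs. path_conf c xs i = c)"
proof (cases "\<forall>j<length xs. applicable (xs ! j) c")
  case True
  then show ?thesis using assms(2) by (auto intro!: path_conf_void_prefix)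
next
  case False
  define j where "j = (LEAST j. j < length xs \<and> \<not> applicable (xs ! j) c)"
  have j: "j < length xs" "\<not> applicable (xs ! j) c"
    using False LeastI_ex[of "\<lambda>j. j < length xs \<and> \<not> applicable (xs ! j) c"]
    unfolding j_def by auto
  have "path_conf c xs j = c"
    using assms(2) not_less_Least[where P = "\<lambda>j. j < length xs \<and> \<not> applicable (xs ! j) c"] j(1)
    by (intro path_conf_void_prefix) (auto simp: j_def[symmetric])
  moreover have "supp_in S (fst (xs ! j))" using assms(2) nth_mem[OF j(1)] by blast
  ultimately have "propensity V S R (path_conf c xs j) (xs ! j) = 0"
    using propensity_eq_0_if_not_applicable[OF assms(1) _ j(2)] by simp
  then show ?thesis unfolding path_prob_def using j by (auto intro!: prod_zero bexI[of _ j])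
qed

definition TC_summand ::
  "real \<Rightarrow> nat set \<Rightarrow> reaction set \<Rightarrow> (conf \<Rightarrow> reaction set) \<Rightarrow> conf \<Rightarrow> nat \<Rightarrow> reaction list \<Rightarrow> ennreal"
  where "TC_summand V S R \<rho> c t xs =
    (if \<not> (\<exists>s. s \<le> t \<and> stopcond (\<rho> c) (path_conf c xs) (\<lambda>i. xs ! i) 0 s)
     then ennreal (path_prob V S R c xs) * ennreal (1 / totprop V S R (path_conf c xs t))
     else 0)"

lemma TC_eq_suminf_TC_summand:
  "TC V S R \<rho> c = (\<Sum>t. \<Sum>xs\<in>{xs. set xs \<subseteq> R \<and> length xs = t}. TC_summand V S R \<rho> c t xs)"
  unfolding TC_def TC_summand_def ..

lemma TC_eq_inverse_totprop:
  assumes "\<forall>\<alpha>\<in>\<rho> c. \<not> applicable \<alpha> c"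
  shows "TC V S R \<rho> c = ennreal (1 / totprop V S R c)"
proof -
  have "stopcond (\<rho> c) (path_conf c xs) (\<lambda>i. xs ! i) 0 1" for xs
    unfolding stopcond_def using assms by (auto intro!: exI[of _ 0])
  then have "\<exists>s. s \<le> t \<and> stopcond (\<rho> c) (path_conf c xs) (\<lambda>i. xs ! i) 0 s" if "t \<noteq> 0" for t xs
    using that by (intro exI[of _ 1]) auto
  then have "TC_summand V S R \<rho> c t xs = 0" if "t \<noteq> 0" for t xs
    unfolding TC_summand_def using that by simp
  then have "TC V S R \<rho> c = (\<Sum>xs\<in>{xs. set xs \<subseteq> R \<and> length xs = 0}. TC_summand V S R \<rho> c 0 xs)"
    unfolding TC_eq_suminf_TC_summand by (subst suminf_finite[of "{0}"]) auto
  also have "{xs. set xs \<subseteq> R \<and> length xs = 0} = {[]}" by auto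
  finally show ?thesis by (simp add: TC_summand_def path_prob_def stopcond_def)
qed

text \<open>Before a reaction of \<open>\<rho> c\<close> is scheduled, the path can only stay at \<open>c\<close>, each step
  weighted by the share of a void reaction in the total propensity.\<close>
lemma TC_summand_le:
  assumes V: "V > 0" and S: "finite S" and supp: "\<forall>\<alpha>\<in>R. supp_in S (fst \<alpha>)"
    and void: "\<forall>\<alpha>\<in>R - \<rho> c. fst \<alpha> = snd \<alpha>" and xs: "set xs \<subseteq> R" "length xs = t"
  shows "TC_summand V S R \<rho> c t xs \<le> ennreal ((\<Prod>i<t. if xs ! i \<in> R - \<rho> c
      then propensity V S R c (xs ! i) / totprop V S R c else 0) / totprop V S R c)"
proof (cases "\<exists>s. s \<le> t \<and> stopcond (\<rho> c) (path_conf c xs) (\<lambda>i. xs ! i) 0 s")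
  case False
  have "xs ! i \<notin> \<rho> c" if "i < t" for i
    using False that unfolding stopcond_def by (metis Suc_leI diff_Suc_1 zero_less_Suc)
  then have void_xs: "\<forall>\<alpha>\<in>set xs. \<alpha> \<in> R - \<rho> c" using xs by (fastforce simp: in_set_conv_nth)
  with supp void have "\<forall>\<alpha>\<in>set xs. supp_in S (fst \<alpha>) \<and> fst \<alpha> = snd \<alpha>" by blast
  then have "path_prob V S R c xs = 0 \<or> (\<forall>i\<le>t. path_conf c xs i = c)"
    using void_path_prob_eq_0_or_const[OF S] xs by blast
  then consider "path_prob V S R c xs = 0" | "\<forall>i\<le>t. path_conf c xs i = c" by blast
  then show ?thesis
  proof cases
    case 2
    then have "path_prob V S R c xs = (\<Prod>i<t. if xs ! i \<in> R - \<rho> c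
        then propensity V S R c (xs ! i) / totprop V S R c else 0)"
      using xs void_xs unfolding path_prob_def by (intro prod.cong) auto
    moreover have "0 \<le> totprop V S R c"
      unfolding totprop_def by (intro sum_nonneg propensity_nonneg[OF V])
    ultimately show ?thesis using False 2 propensity_nonneg[OF V]
      by (simp add: TC_summand_def ennreal_mult[symmetric] prod_nonneg)
  qed (use False in \<open>simp add: TC_summand_def\<close>)
qed (simp add: TC_summand_def)

lemma TC_le_inverse_propensity:
  assumes V: "V > 0" and S: "finite S" and R: "finite R" and \<rho>: "\<rho> c \<subseteq> R"
    and supp: "\<forall>\<alpha>\<in>R. supp_in S (fst \<alpha>)" and void: "\<forall>\<alpha>\<in>R - \<rho> c. fst \<alpha> = snd \<alpha>"
    and P_pos: "(\<Sum>\<alpha>\<in>\<rho> c. propensity V S R c \<alpha>) > 0"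
  shows "TC V S R \<rho> c \<le> ennreal (1 / (\<Sum>\<alpha>\<in>\<rho> c. propensity V S R c \<alpha>))"
proof -
  define P where "P = (\<Sum>\<alpha>\<in>\<rho> c. propensity V S R c \<alpha>)"
  define T where "T = totprop V S R c"
  define q where "q = (\<Sum>\<alpha>\<in>R - \<rho> c. propensity V S R c \<alpha>) / T"
  define h where "h \<alpha> = (if \<alpha> \<in> R - \<rho> c then propensity V S R c \<alpha> / T else 0)" for \<alpha>
  have rest_nonneg: "0 \<le> (\<Sum>\<alpha>\<in>R - \<rho> c. propensity V S R c \<alpha>)"
    by (intro sum_nonneg propensity_nonneg[OF V])
  have T_split: "T = P + (\<Sum>\<alpha>\<in>R - \<rho> c. propensity V S R c \<alpha>)"
    using sum.subset_diff[OF \<rho> R] unfolding T_def totprop_def P_def by (simp add: add.commute)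
  have T_pos: "T > 0" using T_split rest_nonneg P_pos unfolding P_def by linarith
  have q: "0 \<le> q" "q < 1"
    using rest_nonneg T_split T_pos P_pos unfolding q_def P_def[symmetric]
    by (simp_all add: divide_simps)
  have h_nonneg: "0 \<le> h \<alpha>" for \<alpha>
    unfolding h_def using T_pos propensity_nonneg[OF V] by auto
  have "sum h R = q"
    unfolding h_def q_def by (simp add: sum.If_cases R sum_divide_distrib Diff_eq Compl_eq)
  then have geometric: "(\<Sum>xs\<in>{xs. set xs \<subseteq> R \<and> length xs = t}. ennreal ((\<Prod>i<t. h (xs ! i)) / T))
      = ennreal (q ^ t / T)" for t
    using T_pos h_nonneg
    by (simp add: sum_ennreal prod_nonneg sum_words_prod_eq_power[OF R]
      flip: sum_divide_distrib)
  have "TC_summand V S R \<rho> c t xs \<le> ennreal ((\<Prod>i<t. h (xs ! i)) / T)"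
    if "set xs \<subseteq> R" "length xs = t" for t xs
    unfolding h_def T_def using TC_summand_le[where \<rho> = \<rho> and c = c, OF V S supp void that] .
  then have "TC V S R \<rho> c
      \<le> (\<Sum>t. \<Sum>xs\<in>{xs. set xs \<subseteq> R \<and> length xs = t}. ennreal ((\<Prod>i<t. h (xs ! i)) / T))"
    unfolding TC_eq_suminf_TC_summand by (intro suminf_le sum_mono summableI) auto
  also have "\<dots> = (\<Sum>t. ennreal (q ^ t / T))" by (simp only: geometric)
  also have "\<dots> = ennreal (\<Sum>t. q ^ t / T)"
    using q T_pos by (intro suminf_ennreal2) (auto intro!: summable_divide summable_geometric)
  also have "(\<Sum>t. q ^ t / T) = 1 / (1 - q) / T"
    using q by (intro sums_unique[symmetric] sums_divide geometric_sums) auto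
  also have "\<dots> = 1 / P"
    using T_split T_pos q(2) P_pos unfolding q_def P_def[symmetric] by (simp add: divide_simps)
  finally show ?thesis unfolding P_def .
qed

lemma rounds_strict_mono:
  assumes "\<And>t. t < f t" "\<And>t. t \<le> \<sigma> t"
  shows "strict_mono (rounds f \<sigma>)"
  unfolding strict_mono_Suc_iff using assms by (auto intro: le_less_trans)

lemma sum_inverse_pronic:
  "(\<Sum>p\<le>N. if 2 \<le> p then 1 / (real p * (real p - 1)) else 0) = (if N = 0 then 0 else 1 - 1 / real N)"
proof (induction N)
  case (Suc N)
  show ?case
  proof (cases "N = 0")
    case False
    then have "(\<Sum>p\<le>Suc N. if 2 \<le> p then 1 / (real p * (real p - 1)) else 0)
        = 1 - 1 / real N + 1 / (real (Suc N) * real N)"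
      using Suc by simp
    also have "\<dots> = 1 - 1 / real (Suc N)"
    proof -
      have "0 < real N" using False by simp
      then have "0 < real N + real N * real N" by (intro add_pos_pos mult_pos_pos)
      then show ?thesis using \<open>0 < real N\<close> by (simp add: field_simps)
    qed
    finally show ?thesis by simp
  qed simp
qed simp

lemma pronic_le_choose_2:
  fixes l n k :: nat
  assumes "l \<le> n * k" "1 \<le> n"
  shows "real l * (real l - 1) \<le> 4 * real n ^ 2 * max 1 (real (k choose 2))"
proof (cases "k \<le> 1")
  case True
  then have "real l \<le> real n"
    using assms by (metis le_trans mult.right_neutral mult_le_mono2 of_nat_le_iff)
  then have "real l * (real l - 1) \<le> real n ^ 2"
    by (cases l) (auto intro!: mult_mono simp: power2_eq_square)
  moreover have "real n ^ 2 * 1 \<le> 4 * real n ^ 2 * max 1 (real (k choose 2))"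
    by (intro mult_mono) auto
  ultimately show ?thesis by linarith
next
  case False
  have "2 * (k choose 2) = k * (k - 1)"
    by (metis Suc_1 binomial_absorption choose_one)
  then have "2 * real (k choose 2) = real (k * (k - 1))"
    by (metis of_nat_mult of_nat_numeral)
  then have choose: "2 * real (k choose 2) = real k * (real k - 1)"
    by (cases k) (auto simp: algebra_simps)
  have "real l \<le> real n * real k" using assms(1) by (metis of_nat_le_iff of_nat_mult)
  then have "real l * (real l - 1) \<le> (real n * real k) * (real n * real k)"
    by (cases l) (auto intro!: mult_mono)
  also have "\<dots> = real n ^ 2 * (real k * real k)" by (simp add: power2_eq_square)
  also have "\<dots> \<le> real n ^ 2 * (2 * (real k * (real k - 1)))"
  proof (intro mult_left_mono)
    have "2 * real k \<le> real k * real k" using False by (intro mult_right_mono) auto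
    then show "real k * real k \<le> 2 * (real k * (real k - 1))" by (simp add: algebra_simps)
  qed simp
  also have "\<dots> = 4 * real n ^ 2 * real (k choose 2)"
    by (simp flip: choose)
  also have "\<dots> \<le> 4 * real n ^ 2 * max 1 (real (k choose 2))"
    by (intro mult_left_mono) auto
  finally show ?thesis .
qed

definition single_conf :: "nat \<Rightarrow> conf" where
  "single_conf x = (\<lambda>s. if s = x then 1 else 0)"

definition pair_conf :: "nat \<Rightarrow> nat \<Rightarrow> conf" where
  "pair_conf x y = (\<lambda>s. single_conf x s + single_conf y s)"

definition weight :: "nat set \<Rightarrow> (nat \<Rightarrow> int) \<Rightarrow> conf \<Rightarrow> int" where
  "weight S w c = (\<Sum>s\<in>S. w s * int (c s))"

lemma weight_apply_r:
  assumes "applicable \<alpha> c"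
  shows "weight S w (apply_r \<alpha> c) = weight S w c - weight S w (fst \<alpha>) + weight S w (snd \<alpha>)"
proof -
  have count: "int (apply_r \<alpha> c s) = int (c s) - int (fst \<alpha> s) + int (snd \<alpha> s)" for s
    using assms unfolding applicable_def apply_r_def by (simp only: of_nat_add of_nat_diff)
  then have "weight S w (apply_r \<alpha> c)
      = (\<Sum>s\<in>S. w s * int (c s) - w s * int (fst \<alpha> s) + w s * int (snd \<alpha> s))"
    unfolding weight_def by (intro sum.cong refl) (simp only: count algebra_simps)
  then show ?thesis unfolding weight_def by (simp add: sum.distrib sum_subtractf)
qed

lemma weight_single_conf: "finite S \<Longrightarrow> x \<in> S \<Longrightarrow> weight S w (single_conf x) = w x"
  unfolding weight_def single_conf_def by (simp add: if_distrib cong: if_cong)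

lemma weight_pair_conf:
  "finite S \<Longrightarrow> x \<in> S \<Longrightarrow> y \<in> S \<Longrightarrow> weight S w (pair_conf x y) = w x + w y"
  unfolding pair_conf_def weight_def
  by (simp add: distrib_left sum.distrib weight_single_conf[unfolded weight_def])

lemma weight_mono: "(\<And>s. r s \<le> c s) \<Longrightarrow> (\<And>s. s \<in> S \<Longrightarrow> 0 \<le> w s) \<Longrightarrow> weight S w r \<le> weight S w c"
  unfolding weight_def by (intro sum_mono mult_left_mono) auto

lemma weight_nonneg: "(\<And>s. s \<in> S \<Longrightarrow> 0 \<le> w s) \<Longrightarrow> 0 \<le> weight S w c"
  unfolding weight_def by (intro sum_nonneg) auto

lemma csize_eq_weight: "int (csize S c) = weight S (\<lambda>_. 1) c"
  unfolding csize_def weight_def by simp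

lemma csize_single_conf: "finite S \<Longrightarrow> x \<in> S \<Longrightarrow> csize S (single_conf x) = 1"
  using weight_single_conf[of S x "\<lambda>_. 1"] by (simp flip: csize_eq_weight)

lemma csize_pair_conf: "finite S \<Longrightarrow> x \<in> S \<Longrightarrow> y \<in> S \<Longrightarrow> csize S (pair_conf x y) = 2"
  using weight_pair_conf[of S x y "\<lambda>_. 1"] by (simp flip: csize_eq_weight)

lemma supp_in_single_conf: "x \<in> S \<Longrightarrow> supp_in S (single_conf x)"
  unfolding supp_in_def single_conf_def by auto

lemma supp_in_pair_conf: "x \<in> S \<Longrightarrow> y \<in> S \<Longrightarrow> supp_in S (pair_conf x y)"
  unfolding supp_in_def pair_conf_def single_conf_def by auto

lemma applicable_single_conf_iff: "applicable (single_conf x, p) c \<longleftrightarrow> 1 \<le> c x"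
  unfolding applicable_def single_conf_def by (auto split: if_splits)

lemma applicable_pair_conf_iff:
  "applicable (pair_conf x y, p) c \<longleftrightarrow> (if x = y then 2 \<le> c x else 1 \<le> c x \<and> 1 \<le> c y)"
  unfolding applicable_def pair_conf_def single_conf_def by (auto split: if_splits)

lemma prod_choose_single_conf:
  "finite S \<Longrightarrow> x \<in> S \<Longrightarrow> (\<Prod>s\<in>S. real (c s choose single_conf x s)) = real (c x)"
  unfolding single_conf_def by (simp add: if_distrib prod.If_cases Int_absorb1 cong: if_cong)

lemma prod_choose_pair_conf:
  assumes "finite S" "x \<in> S" "y \<in> S"
  shows "(\<Prod>s\<in>S. real (c s choose pair_conf x y s))
    = (if x = y then real (c x choose 2) else real (c x) * real (c y))"
proof (cases "x = y")
  case True
  have "(\<Prod>s\<in>S. real (c s choose pair_conf x y s))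
      = (\<Prod>s\<in>S. if s = x then real (c x choose 2) else 1)"
    using True by (intro prod.cong) (auto simp: pair_conf_def single_conf_def numeral_2_eq_2)
  then show ?thesis using assms True by (simp add: prod.delta)
next
  case False
  have "(\<Prod>s\<in>S. real (c s choose pair_conf x y s))
      = (\<Prod>s\<in>S. (if s = x then real (c x) else 1) * (if s = y then real (c y) else 1))"
    using False by (intro prod.cong) (auto simp: pair_conf_def single_conf_def)
  then show ?thesis using assms False by (simp add: prod.distrib prod.delta)
qed

locale mod_crd =
  fixes Sig :: "nat set" and a :: "nat \<Rightarrow> int" and b :: int and m :: int
  assumes finite_Sig: "finite Sig" and m_pos: "0 < m"
begin

definition nres :: nat where "nres = nat m"

definition fuel :: nat where "fuel = Suc (Max (insert 0 Sig))"

definition waste :: nat where "waste = Suc fuel"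

definition res :: "nat \<Rightarrow> nat" where "res j = Suc waste + j"

definition species :: "nat set" where "species = Sig \<union> {fuel, waste} \<union> res ` {..<nres}"

definition residue :: "nat \<Rightarrow> nat" where "residue s = nat (a s mod m)"

definition input_rxn :: "nat \<Rightarrow> reaction" where
  "input_rxn s = (single_conf s, single_conf (res (residue s)))"

definition fuel_rxn :: reaction where "fuel_rxn = (single_conf fuel, single_conf (res 0))"

definition merge_rxn :: "nat \<Rightarrow> nat \<Rightarrow> reaction" where
  "merge_rxn i j = (pair_conf (res i) (res j), pair_conf (res ((i + j) mod nres)) waste)"

definition active :: "reaction set" where
  "active = insert fuel_rxn (input_rxn ` Sig \<union> case_prod merge_rxn ` ({..<nres} \<times> {..<nres}))"

definition rxns :: "reaction set" where
  "rxns = active \<union>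
     {(r, r) | r. supp_in species r \<and> 1 \<le> csize species r \<and> csize species r \<le> 2 \<and> r \<notin> fst ` active}"

definition yes :: "nat set" where "yes = res ` {j. j < nres \<and> int j mod m = b mod m}"

definition no :: "nat set" where "no = res ` {j. j < nres \<and> int j mod m \<noteq> b mod m}"

definition residue_wt :: "nat \<Rightarrow> int" where
  "residue_wt s = (if s \<in> Sig then a s else if res 0 \<le> s then int (s - res 0) else 0)"

definition potential_wt :: "nat \<Rightarrow> int" where
  "potential_wt s = (if s \<in> Sig \<or> s = fuel then 2 else if res 0 \<le> s then 1 else 0)"

definition live_wt :: "nat \<Rightarrow> int" where "live_wt s = (if s = waste then 0 else 1)"

abbreviation potential :: "conf \<Rightarrow> int" where "potential \<equiv> weight species potential_wt"

lemma less_fuel: "s \<in> Sig \<Longrightarrow> s < fuel"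
  unfolding fuel_def using finite_Sig by (simp add: le_imp_less_Suc)

lemma species_distinct [simp]:
  "fuel \<noteq> waste" "waste \<noteq> fuel" "res j \<noteq> fuel" "fuel \<noteq> res j" "res j \<noteq> waste" "waste \<noteq> res j"
  "res i = res j \<longleftrightarrow> i = j" "fuel \<notin> Sig" "waste \<notin> Sig" "res j \<notin> Sig"
  using less_fuel unfolding waste_def res_def by fastforce+

lemma nres_pos: "0 < nres"
  unfolding nres_def using m_pos by simp

lemma residue_less: "residue s < nres"
  unfolding residue_def nres_def using m_pos by (simp add: nat_less_eq_zless)

lemma int_residue: "int (residue s) = a s mod m"
  unfolding residue_def using m_pos by simp

lemma finite_species: "finite species"
  unfolding species_def using finite_Sig by auto

lemma in_species [simp]:
  "fuel \<in> species" "waste \<in> species" "j < nres \<Longrightarrow> res j \<in> species" "s \<in> Sig \<Longrightarrow> s \<in> species"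
  unfolding species_def by auto

lemma wt_simps [simp]:
  "s \<in> Sig \<Longrightarrow> residue_wt s = a s" "residue_wt fuel = 0" "residue_wt waste = 0"
  "residue_wt (res j) = int j"
  "s \<in> Sig \<Longrightarrow> potential_wt s = 2" "potential_wt fuel = 2" "potential_wt waste = 0"
  "potential_wt (res j) = 1"
  "s \<in> Sig \<Longrightarrow> live_wt s = 1" "live_wt fuel = 1" "live_wt waste = 0" "live_wt (res j) = 1"
  using species_distinct(8-10) unfolding residue_wt_def potential_wt_def live_wt_def
  by (auto simp: res_def waste_def)

lemma sum_species: "sum f species = sum f Sig + f fuel + f waste + (\<Sum>j<nres. f (res j))"
proof -
  have "sum f species = sum f Sig + sum f ({fuel, waste} \<union> res ` {..<nres})"
    unfolding species_def using finite_Sig by (subst Un_assoc, intro sum.union_disjoint) auto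
  also have "sum f ({fuel, waste} \<union> res ` {..<nres}) = f fuel + f waste + sum f (res ` {..<nres})"
    by (subst sum.union_disjoint) auto
  also have "sum f (res ` {..<nres}) = (\<Sum>j<nres. f (res j))"
    by (subst sum.reindex) (auto simp: inj_on_def)
  finally show ?thesis by (simp add: add.assoc)
qed

lemma weight_species:
  "weight species w c = (\<Sum>s\<in>Sig. w s * int (c s)) + w fuel * int (c fuel) + w waste * int (c waste)
     + (\<Sum>j<nres. w (res j) * int (c (res j)))"
  unfolding weight_def by (rule sum_species)

lemma active_cases:
  assumes "\<alpha> \<in> active"
  obtains (input) s where "s \<in> Sig" "\<alpha> = input_rxn s"
    | (fuel) "\<alpha> = fuel_rxn"
    | (merge) i j where "i < nres" "j < nres" "\<alpha> = merge_rxn i j"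
  using assms unfolding active_def by auto

lemma in_active [simp]:
  "s \<in> Sig \<Longrightarrow> input_rxn s \<in> active" "fuel_rxn \<in> active"
  "i < nres \<Longrightarrow> j < nres \<Longrightarrow> merge_rxn i j \<in> active"
  unfolding active_def by auto

lemma active_wellformed:
  assumes "\<alpha> \<in> active"
  shows "supp_in species (fst \<alpha>) \<and> supp_in species (snd \<alpha>) \<and> csize species (fst \<alpha>) \<in> {1, 2}
    \<and> csize species (snd \<alpha>) = csize species (fst \<alpha>)"
  using assms residue_less nres_pos finite_species
  by (cases rule: active_cases)
    (auto simp: input_rxn_def fuel_rxn_def merge_rxn_def supp_in_single_conf supp_in_pair_conf
      csize_single_conf csize_pair_conf)

lemma active_not_void:
  assumes "\<alpha> \<in> active"
  shows "fst \<alpha> \<noteq> snd \<alpha>"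
  using assms
proof (cases rule: active_cases)
  case (input s)
  moreover have "res (residue s) \<noteq> s" using input(1) species_distinct(10) by metis
  ultimately have "fst \<alpha> s \<noteq> snd \<alpha> s" by (simp add: input_rxn_def single_conf_def)
  then show ?thesis by auto
next
  case fuel
  then have "fst \<alpha> fuel \<noteq> snd \<alpha> fuel" by (simp add: fuel_rxn_def single_conf_def)
  then show ?thesis by auto
next
  case (merge i j)
  then have "fst \<alpha> waste \<noteq> snd \<alpha> waste" by (simp add: merge_rxn_def pair_conf_def single_conf_def)
  then show ?thesis by auto
qed

lemma potential_active:
  assumes "\<alpha> \<in> active"
  shows "potential (snd \<alpha>) = potential (fst \<alpha>) - 1"
  using assms by (cases rule: active_cases) (auto simp: input_rxn_def fuel_rxn_def merge_rxn_def
    weight_single_conf weight_pair_conf residue_less nres_pos finite_species)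

lemma residue_active:
  assumes "\<alpha> \<in> active"
  shows "weight species residue_wt (snd \<alpha>) mod m = weight species residue_wt (fst \<alpha>) mod m"
  using assms
proof (cases rule: active_cases)
  case (merge i j)
  have "int ((i + j) mod nres) = (int i + int j) mod m"
    unfolding nres_def using m_pos by (simp add: zmod_int)
  then show ?thesis using merge finite_species
    by (simp add: merge_rxn_def weight_pair_conf mod_add_eq)
qed (use residue_less nres_pos finite_species in
      \<open>auto simp: input_rxn_def fuel_rxn_def weight_single_conf int_residue\<close>)

lemma live_active:
  assumes "\<alpha> \<in> active"
  shows "1 \<le> weight species live_wt (snd \<alpha>)"
  using assms by (cases rule: active_cases) (auto simp: input_rxn_def fuel_rxn_def merge_rxn_def
    weight_single_conf weight_pair_conf residue_less nres_pos finite_species)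

lemma rxns_void: "\<alpha> \<in> rxns \<Longrightarrow> \<alpha> \<notin> active \<Longrightarrow> fst \<alpha> = snd \<alpha>"
  unfolding rxns_def by auto

lemma NV_rxns: "NV rxns = active"
  unfolding NV_def rxns_def using active_not_void by auto

lemma finite_active: "finite active"
  unfolding active_def using finite_Sig by auto

lemma finite_rxns: "finite rxns"
proof -
  let ?B = "{r. \<forall>s. (s \<in> species \<longrightarrow> r s \<in> {..2::nat}) \<and> (s \<notin> species \<longrightarrow> r s = 0)}"
  have "rxns - active \<subseteq> (\<lambda>r. (r, r)) ` ?B"
  proof
    fix \<alpha> assume "\<alpha> \<in> rxns - active"
    then obtain r where r: "\<alpha> = (r, r)" "supp_in species r" "csize species r \<le> 2"
      unfolding rxns_def by blast
    have "r s \<le> csize species r" if "s \<in> species" for s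
      unfolding csize_def using that finite_species by (intro member_le_sum) auto
    with r(2,3) have "r \<in> ?B" unfolding supp_in_def by (auto intro: order_trans)
    then show "\<alpha> \<in> (\<lambda>r. (r, r)) ` ?B" using r(1) by blast
  qed
  moreover have "finite ?B" using finite_species by (intro finite_set_of_finite_funs) auto
  ultimately have "finite (rxns - active)" by (rule finite_subset[OF _ finite_imageI])
  then show ?thesis using finite_active by simp
qed

lemma rxns_supp_in: "\<alpha> \<in> rxns \<Longrightarrow> supp_in species (fst \<alpha>)"
  unfolding rxns_def by (auto dest: active_wellformed)

lemma csize_apply_r:
  assumes "\<alpha> \<in> rxns" "applicable \<alpha> c"
  shows "csize species (apply_r \<alpha> c) = csize species c"
proof (cases "\<alpha> \<in> active")
  case True
  then show ?thesis
    using weight_apply_r[OF assms(2), of species "\<lambda>_. 1"] active_wellformed[OF True]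
    by (simp flip: csize_eq_weight)
next
  case False
  then have "fst \<alpha> = snd \<alpha>" using rxns_void assms(1) by blast
  then show ?thesis using apply_r_void[of "fst \<alpha>" c] assms(2) by (cases \<alpha>) auto
qed

lemma csize_reach: "reach rxns c c' \<Longrightarrow> csize species c' = csize species c"
  unfolding reach_def by (induction rule: rtranclp_induct) (auto simp: step_def csize_apply_r)

lemma crn_rxns: "crn species rxns"
  unfolding crn_def
proof (intro conjI)
  show "\<forall>(r, p)\<in>rxns. supp_in species r \<and> supp_in species p \<and> csize species r \<in> {1, 2}
      \<and> csize species r \<le> csize species p"
    unfolding rxns_def using active_wellformed by fastforce
  show "\<forall>r. supp_in species r \<and> 1 \<le> csize species r \<and> csize species r \<le> 2 \<longrightarrow> Rof rxns r \<noteq> {}"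
  proof (intro allI impI)
    fix r assume "supp_in species r \<and> 1 \<le> csize species r \<and> csize species r \<le> 2"
    then show "Rof rxns r \<noteq> {}"
      unfolding Rof_def rxns_def by (cases "r \<in> fst ` active") force+
  qed
  show "\<forall>(r, p)\<in>rxns. r = p \<longrightarrow> Rof rxns r = {(r, p)}"
    unfolding Rof_def rxns_def using active_not_void by force
  show "finite_density species rxns"
    unfolding finite_density_def using csize_reach by (intro exI[of _ 1]) auto
qed (use finite_species finite_rxns in auto)

lemma crd_rxns: "crd species rxns Sig no yes fuel"
  unfolding crd_def using crn_rxns by (auto simp: species_def yes_def no_def)

definition quiescent :: "conf \<Rightarrow> bool" where
  "quiescent c \<longleftrightarrow> (\<forall>\<alpha>\<in>active. \<not> applicable \<alpha> c)"

abbreviation res_count :: "conf \<Rightarrow> nat" where "res_count c \<equiv> \<Sum>j<nres. c (res j)"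

lemma applicable_input_rxn_iff: "applicable (input_rxn s) c \<longleftrightarrow> 1 \<le> c s"
  unfolding input_rxn_def by (rule applicable_single_conf_iff)

lemma applicable_fuel_rxn_iff: "applicable fuel_rxn c \<longleftrightarrow> 1 \<le> c fuel"
  unfolding fuel_rxn_def by (rule applicable_single_conf_iff)

lemma applicable_merge_rxn_iff:
  "applicable (merge_rxn i j) c \<longleftrightarrow> (if i = j then 2 \<le> c (res i) else 1 \<le> c (res i) \<and> 1 \<le> c (res j))"
  unfolding merge_rxn_def by (simp add: applicable_pair_conf_iff)

lemma res_count_ge_if_applicable:
  assumes "i < nres" "j < nres" "applicable (merge_rxn i j) c"
  shows "2 \<le> res_count c"
proof (cases "i = j")
  case True
  then show ?thesis
    using assms member_le_sum[of i "{..<nres}" "\<lambda>k. c (res k)"]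
    by (simp add: applicable_merge_rxn_iff)
next
  case False
  then have "c (res i) + c (res j) \<le> res_count c"
    using assms sum_mono2[of "{..<nres}" "{i, j}" "\<lambda>k. c (res k)"] by simp
  then show ?thesis using assms False by (simp add: applicable_merge_rxn_iff)
qed

lemma merge_applicable_if_res_count_ge:
  assumes "2 \<le> res_count c"
  obtains i j where "i < nres" "j < nres" "applicable (merge_rxn i j) c"
proof -
  have "res_count c \<noteq> 0" using assms by linarith
  then obtain i where i: "i < nres" "1 \<le> c (res i)" by (auto simp: Suc_le_eq)
  show ?thesis
  proof (cases "2 \<le> c (res i)")
    case True
    then show ?thesis using that[of i i] i by (simp add: applicable_merge_rxn_iff)
  next
    case False
    then have "c (res i) = 1" using i by simp
    moreover have "res_count c = c (res i) + (\<Sum>k\<in>{..<nres} - {i}. c (res k))"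
      using i(1) by (simp add: sum.remove)
    ultimately have "(\<Sum>k\<in>{..<nres} - {i}. c (res k)) \<noteq> 0" using assms by linarith
    then obtain j where "j \<in> {..<nres} - {i}" "1 \<le> c (res j)" by (auto simp: Suc_le_eq)
    then show ?thesis using that[of i j] i by (auto simp: applicable_merge_rxn_iff)
  qed
qed

lemma quiescent_iff: "quiescent c \<longleftrightarrow> (\<forall>s\<in>Sig. c s = 0) \<and> c fuel = 0 \<and> res_count c \<le> 1"
proof
  assume q: "quiescent c"
  show "(\<forall>s\<in>Sig. c s = 0) \<and> c fuel = 0 \<and> res_count c \<le> 1"
  proof (intro conjI ballI)
    show "c s = 0" if "s \<in> Sig" for s
    proof -
      have "\<not> applicable (input_rxn s) c" using q that unfolding quiescent_def by simp
      then show ?thesis by (simp add: applicable_input_rxn_iff)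
    qed
    have "\<not> applicable fuel_rxn c" using q unfolding quiescent_def by simp
    then show "c fuel = 0" by (simp add: applicable_fuel_rxn_iff)
    show "res_count c \<le> 1"
    proof (rule ccontr)
      assume "\<not> res_count c \<le> 1"
      then have "2 \<le> res_count c" by simp
      then obtain i j where "i < nres" "j < nres" "applicable (merge_rxn i j) c"
        by (rule merge_applicable_if_res_count_ge)
      then show False using q unfolding quiescent_def by simp
    qed
  qed
next
  assume c: "(\<forall>s\<in>Sig. c s = 0) \<and> c fuel = 0 \<and> res_count c \<le> 1"
  have "\<not> applicable \<alpha> c" if "\<alpha> \<in> active" for \<alpha>
    using that
  proof (cases rule: active_cases)
    case (input s)
    then show ?thesis using c by (simp add: applicable_input_rxn_iff)
  next
    case fuel
    then show ?thesis using c by (simp add: applicable_fuel_rxn_iff)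
  next
    case (merge i j)
    have "\<not> 2 \<le> res_count c" using c by simp
    then show ?thesis using res_count_ge_if_applicable[OF merge(1,2)] merge(3) by blast
  qed
  then show "quiescent c" unfolding quiescent_def by blast
qed

lemma quiescent_step: "quiescent c \<Longrightarrow> step rxns c c' \<Longrightarrow> c' = c"
  unfolding quiescent_def step_def using rxns_void apply_r_void by (metis prod.collapse)

lemma quiescent_in_halt:
  assumes "quiescent c" "c \<in> Z"
  shows "c \<in> halt rxns Z"
proof -
  have "c' = c" if "reach rxns c c'" for c'
    using that unfolding reach_def
    by (induction rule: rtranclp_induct) (auto dest: quiescent_step[OF assms(1)])
  then show ?thesis using assms(2) unfolding halt_def by blast
qed

lemma sum_res_image: "K \<subseteq> {..<nres} \<Longrightarrow> (\<Sum>s\<in>res ` K. c s) = (\<Sum>k\<in>K. c (res k))"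
  by (subst sum.reindex) (auto simp: inj_on_def)

lemma quiescent_in_D:
  assumes q: "quiescent c" and live: "1 \<le> weight species live_wt c"
    and residue: "weight species residue_wt c mod m = X mod m"
  shows "c \<in> D no yes (X mod m = b mod m)"
proof -
  have c: "\<forall>s\<in>Sig. c s = 0" "c fuel = 0" "res_count c \<le> 1"
    using q unfolding quiescent_iff by auto
  moreover have "1 \<le> int (res_count c)"
    using live c by (simp add: weight_species of_nat_sum)
  ultimately have "res_count c = Suc 0" by linarith
  then obtain j where j: "j < nres" and c_res: "\<And>k. k < nres \<Longrightarrow> c (res k) = (if k = j then 1 else 0)"
    unfolding sum_eq_Suc0_iff[OF finite_lessThan] by auto
  have "(\<Sum>k<nres. int k * int (c (res k))) = (\<Sum>k<nres. if k = j then int j else 0)"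
    using c_res by (intro sum.cong) auto
  then have "weight species residue_wt c = int j"
    using c j by (simp add: weight_species)
  then have j_mod: "int j mod m = X mod m" using residue by simp
  have sum_res: "(\<Sum>s\<in>res ` K. c s) = (if j \<in> K then 1 else 0)" if K: "K \<subseteq> {..<nres}" for K
  proof -
    have "(\<Sum>k\<in>K. c (res k)) = (\<Sum>k\<in>K. if k = j then 1 else 0)"
      using K c_res by (intro sum.cong) auto
    then show ?thesis using K finite_subset[OF K] by (simp add: sum_res_image)
  qed
  have "(\<Sum>s\<in>yes. c s) = (if int j mod m = b mod m then 1 else 0)"
    unfolding yes_def using j by (subst sum_res) auto
  moreover have "(\<Sum>s\<in>no. c s) = (if int j mod m = b mod m then 0 else 1)"
    unfolding no_def using j by (subst sum_res) auto
  ultimately show ?thesis unfolding D_def using j_mod by simp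
qed

definition nrxns :: real where "nrxns = real (card rxns)"

lemma nrxns_ge_1: "1 \<le> nrxns"
proof -
  have "fuel_rxn \<in> rxns" unfolding rxns_def by simp
  then have "0 < card rxns" using finite_rxns card_gt_0_iff by blast
  then show ?thesis unfolding nrxns_def by simp
qed

lemma card_Rof_bounds:
  assumes "\<alpha> \<in> rxns"
  shows "1 \<le> real (card (Rof rxns (fst \<alpha>)))" "real (card (Rof rxns (fst \<alpha>))) \<le> nrxns"
proof -
  have sub: "Rof rxns (fst \<alpha>) \<subseteq> rxns" unfolding Rof_def by auto
  have "\<alpha> \<in> Rof rxns (fst \<alpha>)" using assms unfolding Rof_def by auto
  then have "0 < card (Rof rxns (fst \<alpha>))"
    using finite_subset[OF sub finite_rxns] card_gt_0_iff by blast
  then show "1 \<le> real (card (Rof rxns (fst \<alpha>)))" by simp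
  show "real (card (Rof rxns (fst \<alpha>))) \<le> nrxns"
    unfolding nrxns_def using card_mono[OF finite_rxns sub] by simp
qed

lemma propensity_single_conf_ge:
  assumes "\<alpha> \<in> rxns" "fst \<alpha> = single_conf x" "x \<in> species" "1 \<le> c x"
  shows "1 / nrxns \<le> propensity V species rxns c \<alpha>"
proof -
  note card = card_Rof_bounds[OF assms(1)]
  have "1 / nrxns \<le> 1 / real (card (Rof rxns (fst \<alpha>)))"
    using card by (intro divide_left_mono) auto
  also have "\<dots> \<le> real (c x) / real (card (Rof rxns (fst \<alpha>)))"
    using assms(4) card by (intro divide_right_mono) auto
  also have "\<dots> = propensity V species rxns c \<alpha>"
    unfolding propensity_def using assms finite_species
    by (simp add: csize_single_conf prod_choose_single_conf)
  finally show ?thesis .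
qed

definition pair_count :: "conf \<Rightarrow> nat \<Rightarrow> nat \<Rightarrow> real" where
  "pair_count c i j = (if i = j then real (c (res i) choose 2) else real (c (res i)) * real (c (res j)))"

lemma propensity_merge_rxn_ge:
  assumes "0 < V" "i < nres" "j < nres"
  shows "pair_count c i j / (V * nrxns) \<le> propensity V species rxns c (merge_rxn i j)"
proof -
  have "merge_rxn i j \<in> rxns" using assms unfolding rxns_def by simp
  note card = card_Rof_bounds[OF this]
  have "propensity V species rxns c (merge_rxn i j)
      = pair_count c i j / (V * real (card (Rof rxns (fst (merge_rxn i j)))))"
    unfolding propensity_def pair_count_def using assms finite_species
    by (simp add: merge_rxn_def csize_pair_conf prod_choose_pair_conf)
  moreover have "0 \<le> pair_count c i j" unfolding pair_count_def by simp
  ultimately show ?thesis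
    using assms(1) card by (simp add: frac_le mult_left_mono)
qed

lemma propensity_applicable_merge_rxn_ge:
  assumes "0 < V" "i < nres" "j < nres" "applicable (merge_rxn i j) c"
  shows "1 / (V * nrxns) \<le> propensity V species rxns c (merge_rxn i j)"
proof -
  have "1 \<le> pair_count c i j"
    using assms(4) zero_less_binomial_iff[of "c (res i)" 2]
    by (auto simp: pair_count_def applicable_merge_rxn_iff Suc_le_eq of_nat_mult[symmetric]
      simp del: zero_less_binomial_iff of_nat_mult)
  then have "1 / (V * nrxns) \<le> pair_count c i j / (V * nrxns)"
    using assms(1) nrxns_ge_1 by (intro divide_right_mono) auto
  then show ?thesis using propensity_merge_rxn_ge[OF assms(1-3), of c] by linarith
qed

lemma res_count_le_pigeonhole: "\<exists>k<nres. res_count c \<le> nres * c (res k)"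
proof -
  let ?M = "Max ((\<lambda>j. c (res j)) ` {..<nres})"
  have "?M \<in> (\<lambda>j. c (res j)) ` {..<nres}" using nres_pos by (intro Max_in) auto
  moreover have "res_count c \<le> nres * ?M"
    using sum_bounded_above[of "{..<nres}" "\<lambda>j. c (res j)" ?M] by simp
  ultimately show ?thesis by auto
qed

lemma active_propensity_ge_merge:
  assumes V: "0 < V" and l: "2 \<le> res_count c"
  shows "real (res_count c) * (real (res_count c) - 1) / (4 * real nres ^ 2 * V * nrxns)
    \<le> (\<Sum>\<alpha>\<in>active. propensity V species rxns c \<alpha>)"
    (is "?lhs \<le> ?P")
proof -
  have le_P: "propensity V species rxns c \<alpha> \<le> ?P" if "\<alpha> \<in> active" for \<alpha>
    using that finite_active by (intro member_le_sum propensity_nonneg[OF V])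
  obtain i j where ij: "i < nres" "j < nres" "applicable (merge_rxn i j) c"
    using merge_applicable_if_res_count_ge[OF l] .
  obtain k where k: "k < nres" "res_count c \<le> nres * c (res k)"
    using res_count_le_pigeonhole by blast
  have "1 / (V * nrxns) \<le> ?P"
    using ij(1,2) by (intro order_trans[OF propensity_applicable_merge_rxn_ge[OF V ij] le_P]) simp
  moreover have "real (c (res k) choose 2) / (V * nrxns) \<le> ?P"
    using propensity_merge_rxn_ge[OF V k(1) k(1), of c] le_P[of "merge_rxn k k"] k(1)
    by (simp add: pair_count_def)
  ultimately have "max 1 (real (c (res k) choose 2)) / (V * nrxns) \<le> ?P"
    by (simp add: max_def)
  moreover have "?lhs \<le> max 1 (real (c (res k) choose 2)) / (V * nrxns)"
    using pronic_le_choose_2[OF k(2)] nres_pos V nrxns_ge_1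
    by (simp add: divide_simps mult.assoc) (simp add: mult.commute mult.left_commute)
  ultimately show ?thesis by linarith
qed

lemma active_single_conf_if_input_or_fuel:
  fixes c :: conf
  assumes "\<not> ((\<forall>s\<in>Sig. c s = 0) \<and> c fuel = 0)"
  obtains x \<alpha> where "x \<in> species" "1 \<le> c x" "\<alpha> \<in> active" "fst \<alpha> = single_conf x"
proof -
  consider s where "s \<in> Sig" "1 \<le> c s" | "1 \<le> c fuel" using assms by (auto simp: Suc_le_eq)
  then show thesis
  proof cases
    case (1 s)
    then show thesis
      using that[of s "input_rxn s"] in_active(1)[of s] by (simp add: input_rxn_def)
  next
    case 2
    then show thesis using that[of fuel fuel_rxn] in_active(2) by (simp add: fuel_rxn_def)
  qed
qed

text \<open>Upper bound on the expected duration of a round that starts at potential \<open>p\<close>,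
  see \<open>active_propensity_ge\<close>.\<close>
definition round_cost :: "real \<Rightarrow> nat \<Rightarrow> real" where
  "round_cost V p =
     nrxns + (if 2 \<le> p then 4 * real nres ^ 2 * V * nrxns / (real p * (real p - 1)) else 0)"

lemma round_cost_ge: "0 < V \<Longrightarrow> nrxns \<le> round_cost V p"
  unfolding round_cost_def using nrxns_ge_1 by (auto intro!: divide_nonneg_pos mult_pos_pos)

lemma round_cost_pos: "0 < V \<Longrightarrow> 0 < round_cost V p"
  using round_cost_ge[of V p] nrxns_ge_1 by linarith

lemma active_propensity_ge:
  assumes V: "0 < V" and nq: "\<not> quiescent c"
  shows "1 / round_cost V (nat (potential c)) \<le> (\<Sum>\<alpha>\<in>active. propensity V species rxns c \<alpha>)"
    (is "_ \<le> ?P")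
proof (cases "(\<forall>s\<in>Sig. c s = 0) \<and> c fuel = 0")
  case True
  define l where "l = res_count c"
  have l: "2 \<le> l" using nq True unfolding quiescent_iff l_def by simp
  define G where "G = 4 * real nres ^ 2 * V * nrxns / (real l * (real l - 1))"
  have "potential c = int l" using True unfolding l_def by (simp add: weight_species)
  then have cost: "round_cost V (nat (potential c)) = nrxns + G"
    using l unfolding round_cost_def G_def by simp
  have G_pos: "0 < G"
    unfolding G_def using V l nres_pos nrxns_ge_1 by simp
  have "1 / round_cost V (nat (potential c)) \<le> 1 / G"
    unfolding cost using G_pos nrxns_ge_1 by (intro divide_left_mono mult_pos_pos) auto
  also have "1 / G = real l * (real l - 1) / (4 * real nres ^ 2 * V * nrxns)"
    unfolding G_def by simp
  also have "\<dots> \<le> ?P"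
    using active_propensity_ge_merge[OF V] l unfolding l_def by simp
  finally show ?thesis .
next
  case False
  then obtain x \<alpha> where x: "x \<in> species" "1 \<le> c x" and \<alpha>: "\<alpha> \<in> active" "fst \<alpha> = single_conf x"
    by (rule active_single_conf_if_input_or_fuel)
  have "1 / round_cost V (nat (potential c)) \<le> 1 / nrxns"
    using round_cost_ge[OF V, of "nat (potential c)"] nrxns_ge_1
    by (intro divide_left_mono mult_pos_pos) auto
  also have "\<dots> \<le> propensity V species rxns c \<alpha>"
    using \<alpha> x by (intro propensity_single_conf_ge) (auto simp: rxns_def)
  also have "\<dots> \<le> ?P"
    using \<alpha> finite_active by (intro member_le_sum propensity_nonneg[OF V])
  finally show ?thesis .
qed

lemma TC_quiescent_le:
  assumes V: "0 < V" and q: "quiescent c" and c: "1 \<le> csize species c"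
  shows "TC V species rxns (\<lambda>_. NV rxns) c \<le> ennreal nrxns"
proof -
  have "csize species c \<noteq> 0" using c by linarith
  then obtain x where x: "x \<in> species" "1 \<le> c x"
    unfolding csize_def using finite_species by (auto simp: Suc_le_eq)
  have "Rof rxns (single_conf x) \<noteq> {}"
    using crn_rxns x finite_species unfolding crn_def
    by (simp add: supp_in_single_conf csize_single_conf)
  then obtain \<alpha> where \<alpha>: "\<alpha> \<in> rxns" "fst \<alpha> = single_conf x" unfolding Rof_def by auto
  have tp: "1 / nrxns \<le> totprop V species rxns c"
    using propensity_single_conf_ge[of \<alpha> x c V, OF \<alpha> x]
      propensity_le_totprop[OF V finite_rxns \<alpha>(1), of species c]
    by linarith
  have inv_pos: "0 < 1 / nrxns" using nrxns_ge_1 by simp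
  have "1 / totprop V species rxns c \<le> 1 / (1 / nrxns)"
    using tp inv_pos by (intro divide_left_mono mult_pos_pos) linarith+
  then have "1 / totprop V species rxns c \<le> nrxns" by simp
  moreover have "TC V species rxns (\<lambda>_. NV rxns) c = ennreal (1 / totprop V species rxns c)"
    using q unfolding quiescent_def NV_rxns by (intro TC_eq_inverse_totprop) auto
  ultimately show ?thesis by (simp add: ennreal_leI)
qed

lemma TC_le_round_cost:
  assumes V: "0 < V" and c: "1 \<le> csize species c"
  shows "TC V species rxns (\<lambda>_. NV rxns) c \<le> ennreal (round_cost V (nat (potential c)))"
proof (cases "quiescent c")
  case True
  have "ennreal nrxns \<le> ennreal (round_cost V (nat (potential c)))"
    by (rule ennreal_leI[OF round_cost_ge[OF V]])
  with TC_quiescent_le[OF V True c] show ?thesis by (rule order_trans)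
next
  case False
  let ?P = "\<Sum>\<alpha>\<in>active. propensity V species rxns c \<alpha>"
  have cost_pos: "0 < round_cost V (nat (potential c))" using V by (rule round_cost_pos)
  have P: "1 / round_cost V (nat (potential c)) \<le> ?P"
    by (rule active_propensity_ge[OF V False])
  moreover have "0 < 1 / round_cost V (nat (potential c))" using cost_pos by simp
  ultimately have P_pos: "0 < ?P" by linarith
  have "TC V species rxns (\<lambda>_. NV rxns) c
      \<le> ennreal (1 / (\<Sum>\<alpha>\<in>(\<lambda>_. NV rxns) c. propensity V species rxns c \<alpha>))"
  proof (rule TC_le_inverse_propensity[OF V finite_species finite_rxns])
    show "(\<lambda>_. NV rxns) c \<subseteq> rxns" unfolding NV_def by auto
    show "\<forall>\<alpha>\<in>rxns. supp_in species (fst \<alpha>)" using rxns_supp_in by blast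
    show "\<forall>\<alpha>\<in>rxns - (\<lambda>_. NV rxns) c. fst \<alpha> = snd \<alpha>" using rxns_void by (simp add: NV_rxns)
  qed (simp add: NV_rxns P_pos)
  also have "\<dots> = ennreal (1 / ?P)" by (simp add: NV_rxns)
  also have "1 / ?P \<le> 1 / (1 / round_cost V (nat (potential c)))"
    using P P_pos cost_pos by (intro divide_left_mono mult_pos_pos) auto
  finally show ?thesis by (simp add: ennreal_leI)
qed

lemma sum_round_cost_le:
  assumes "0 < V"
  shows "(\<Sum>p\<le>N. round_cost V p) \<le> real (N + 1) * nrxns + 4 * real nres ^ 2 * V * nrxns"
proof -
  have "round_cost V p = nrxns
      + 4 * real nres ^ 2 * V * nrxns * (if 2 \<le> p then 1 / (real p * (real p - 1)) else 0)" for p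
    unfolding round_cost_def by simp
  then have "(\<Sum>p\<le>N. round_cost V p) = real (N + 1) * nrxns
      + 4 * real nres ^ 2 * V * nrxns * (\<Sum>p\<le>N. if 2 \<le> p then 1 / (real p * (real p - 1)) else 0)"
    by (simp add: sum.distrib sum_distrib_left)
  also have "\<dots> \<le> real (N + 1) * nrxns + 4 * real nres ^ 2 * V * nrxns * 1"
    using assms nrxns_ge_1 by (intro add_left_mono mult_left_mono) (auto simp: sum_inverse_pronic)
  finally show ?thesis by simp
qed

lemma sum_round_cost_inj_le:
  assumes "0 < V" "inj_on p C" "\<And>i. p i \<le> N"
  shows "(\<Sum>i\<in>C. round_cost V (p i)) \<le> real (N + 1) * nrxns + 4 * real nres ^ 2 * V * nrxns"
proof -
  have "(\<Sum>i\<in>C. round_cost V (p i)) = (\<Sum>q\<in>p ` C. round_cost V q)"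
    by (simp add: sum.reindex[OF assms(2)])
  also have "\<dots> \<le> (\<Sum>q\<le>N. round_cost V q)"
    using assms(3) round_cost_pos[OF assms(1)] by (intro sum_mono2) (auto intro: less_imp_le)
  also have "\<dots> \<le> real (N + 1) * nrxns + 4 * real nres ^ 2 * V * nrxns"
    using assms(1) by (rule sum_round_cost_le)
  finally show ?thesis .
qed

lemma potential_nonneg: "0 \<le> potential c"
  by (rule weight_nonneg) (simp add: potential_wt_def)

lemma potential_le_csize: "potential c \<le> 2 * int (csize species c)"
proof -
  have "potential c \<le> (\<Sum>s\<in>species. 2 * int (c s))"
    unfolding weight_def by (intro sum_mono mult_right_mono) (auto simp: potential_wt_def)
  then show ?thesis unfolding csize_def by (simp add: sum_distrib_left)
qed

end

locale mod_run = mod_crd +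
  fixes cs :: "nat \<Rightarrow> conf" and as :: "nat \<Rightarrow> reaction"
  assumes execution: "execution rxns cs as" and fair: "weakly_fair rxns cs as"
    and valid: "valid_init species Sig fuel (cs 0)"
begin

lemma run_step: "as t \<in> rxns" "applicable (as t) (cs t)" "cs (Suc t) = apply_r (as t) (cs t)"
  using execution unfolding execution_def by auto

lemma void_step: "as t \<notin> active \<Longrightarrow> cs (Suc t) = cs t"
  using run_step[of t] rxns_void apply_r_void by (metis prod.collapse)

lemma weight_Suc:
  "weight S w (cs (Suc t)) = weight S w (cs t) - weight S w (fst (as t)) + weight S w (snd (as t))"
  using run_step weight_apply_r by simp

lemma potential_Suc_active: "as t \<in> active \<Longrightarrow> potential (cs (Suc t)) = potential (cs t) - 1"
  using weight_Suc potential_active by simp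

lemma potential_Suc_le: "potential (cs (Suc t)) \<le> potential (cs t)"
  using potential_Suc_active void_step by (cases "as t \<in> active") auto

lemma potential_antimono: "t \<le> s \<Longrightarrow> potential (cs s) \<le> potential (cs t)"
  using lift_Suc_antimono_le[of "\<lambda>t. potential (cs t)"] potential_Suc_le by blast

lemma potential_less:
  assumes "t \<le> u" "u < s" "as u \<in> active"
  shows "potential (cs s) < potential (cs t)"
  using potential_antimono[of t u] potential_antimono[of "Suc u" s] potential_Suc_active[of u] assms
  by simp

lemma residue_invariant:
  "weight species residue_wt (cs t) mod m = weight species residue_wt (cs 0) mod m"
proof (induction t)
  case (Suc t)
  show ?case
  proof (cases "as t \<in> active")
    case True
    then show ?thesis
      using Suc weight_Suc[of species residue_wt t] residue_active[OF True]
      by (metis mod_add_right_eq diff_add_cancel)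
  qed (use Suc void_step in simp)
qed simp

lemma live_pos: "1 \<le> weight species live_wt (cs t)"
proof (induction t)
  case 0
  have "1 \<le> cs 0 fuel" using valid unfolding valid_init_def by simp
  moreover have "0 \<le> (\<Sum>s\<in>Sig. live_wt s * int (cs 0 s))" "0 \<le> (\<Sum>j<nres. int (cs 0 (res j)))"
    by (auto intro!: sum_nonneg simp: live_wt_def)
  ultimately show ?case by (simp add: weight_species)
next
  case (Suc t)
  show ?case
  proof (cases "as t \<in> active")
    case True
    have "weight species live_wt (fst (as t)) \<le> weight species live_wt (cs t)"
      using run_step(2)[of t] unfolding applicable_def
      by (intro weight_mono) (auto simp: live_wt_def)
    then show ?thesis using weight_Suc[of species live_wt t] live_active[OF True] by simp
  qed (use Suc void_step in simp)
qed

lemma csize_run: "csize species (cs t) = csize species (cs 0)"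
  by (induction t) (auto simp: run_step csize_apply_r)

lemma const_if_no_active:
  assumes "\<forall>u. t \<le> u \<longrightarrow> u < s \<longrightarrow> as u \<notin> active" "t \<le> s"
  shows "cs s = cs t"
  using assms(2) by (induction rule: dec_induct) (use assms(1) void_step in auto)

lemma active_fires_if_not_quiescent:
  assumes "\<not> quiescent (cs t)"
  obtains s where "t \<le> s" "as s \<in> active"
proof -
  obtain \<alpha> where \<alpha>: "\<alpha> \<in> active" "applicable \<alpha> (cs t)" using assms unfolding quiescent_def by auto
  then obtain s where s: "t \<le> s" "as s = \<alpha> \<or> \<not> applicable \<alpha> (cs s)"
    using fair unfolding weakly_fair_def rxns_def by blast
  then have "as s = \<alpha> \<or> cs s \<noteq> cs t" using \<alpha> by auto
  then show ?thesis using that s(1) \<alpha>(1) const_if_no_active[of t s] by blast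
qed

lemma eventually_quiescent: "\<exists>t. quiescent (cs t)"
proof -
  obtain t where t: "\<forall>u. nat (potential (cs t)) \<le> nat (potential (cs u))"
    using ex_has_least_nat[of "\<lambda>_. True" 0 "\<lambda>t. nat (potential (cs t))"] by blast
  have "quiescent (cs t)"
  proof (rule ccontr)
    assume "\<not> quiescent (cs t)"
    then obtain s where "t \<le> s" "as s \<in> active" by (rule active_fires_if_not_quiescent)
    then have "potential (cs (Suc s)) < potential (cs t)" by (intro potential_less) auto
    then show False using t[rule_format, of "Suc s"] potential_nonneg[of "cs (Suc s)"] by linarith
  qed
  then show ?thesis ..
qed

definition input_value :: int where
  "input_value = (\<Sum>s\<in>Sig. a s * int (restrict_to Sig (cs 0) s))"

abbreviation decision :: "conf set" where "decision \<equiv> D no yes (input_value mod m = b mod m)"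

lemma residue_weight_init: "weight species residue_wt (cs 0) = input_value"
proof -
  have "cs 0 waste = 0" "cs 0 (res j) = 0" for j
    using valid unfolding valid_init_def by auto
  moreover have "(\<Sum>s\<in>Sig. residue_wt s * int (cs 0 s)) = input_value"
    unfolding input_value_def restrict_to_def by (intro sum.cong) auto
  ultimately show ?thesis by (simp add: weight_species)
qed

lemma quiescent_in_halt_decision: "quiescent (cs t) \<Longrightarrow> cs t \<in> halt rxns decision"
  using quiescent_in_halt quiescent_in_D live_pos residue_invariant residue_weight_init by metis

lemma halts_into_decision: "halts_into rxns decision cs"
  unfolding halts_into_def using eventually_quiescent quiescent_in_halt_decision by blast

lemma csize_run_ge_1: "1 \<le> csize species (cs t)"
  using csize_run[of t] valid unfolding valid_init_def is_conf_def by simp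

definition round_end :: "nat \<Rightarrow> nat" where "round_end t = tau active cs as t"

lemma round_end_stopcond: "stopcond active cs as t (round_end t)"
proof -
  have "\<exists>s. stopcond active cs as t s"
  proof (cases "quiescent (cs t)")
    case True
    then have "stopcond active cs as t (Suc t)" unfolding stopcond_def quiescent_def by auto
    then show ?thesis ..
  next
    case False
    then obtain s where "t \<le> s" "as s \<in> active" by (rule active_fires_if_not_quiescent)
    then have "stopcond active cs as t (Suc s)" unfolding stopcond_def by simp
    then show ?thesis ..
  qed
  then show ?thesis unfolding round_end_def tau_def by (rule LeastI_ex)
qed

lemma less_round_end: "t < round_end t"
  using round_end_stopcond unfolding stopcond_def by blast

definition halt_time :: nat where "halt_time = (LEAST t. cs t \<in> halt rxns decision)"

lemma halting_step_eq: "halting_step rxns decision cs = enat halt_time"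
  using halts_into_decision unfolding halting_step_def halt_time_def halts_into_def by simp

lemma halt_time_le: "cs t \<in> halt rxns decision \<Longrightarrow> halt_time \<le> t"
  unfolding halt_time_def by (rule Least_le)

text \<open>If no active reaction fired during a round, the configuration stayed put, so the
  round can only have ended because every active reaction is inapplicable, i.e. at a
  quiescent, hence halted, configuration.\<close>
lemma active_in_round:
  assumes "round_end t < halt_time"
  obtains u where "t \<le> u" "u < round_end t" "as u \<in> active"
proof -
  have "\<exists>u. t \<le> u \<and> u < round_end t \<and> as u \<in> active"
  proof (rule ccontr)
    assume no_active: "\<not> (\<exists>u. t \<le> u \<and> u < round_end t \<and> as u \<in> active)"
    have const: "cs u = cs t" if "t \<le> u" "u \<le> round_end t" for u
      using no_active that(2) by (intro const_if_no_active[OF _ that(1)]) auto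
    have t_less: "t < round_end t" by (rule less_round_end)
    then have "t \<le> round_end t - 1" "round_end t - 1 < round_end t" by auto
    then have "as (round_end t - 1) \<notin> active" using no_active by blast
    then have inapplicable: "\<forall>\<alpha>\<in>active. \<exists>u. t \<le> u \<and> u \<le> round_end t \<and> \<not> applicable \<alpha> (cs u)"
      using round_end_stopcond[of t] unfolding stopcond_def by blast
    have "quiescent (cs (round_end t))"
      unfolding quiescent_def
    proof
      fix \<alpha> assume "\<alpha> \<in> active"
      then obtain u where "t \<le> u" "u \<le> round_end t" "\<not> applicable \<alpha> (cs u)"
        using inapplicable by blast
      then show "\<not> applicable \<alpha> (cs (round_end t))"
        using const[of u] const[of "round_end t"] t_less by simp
    qed
    then have "halt_time \<le> round_end t"
      by (intro halt_time_le quiescent_in_halt_decision)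
    then show False using assms by simp
  qed
  then show ?thesis using that by blast
qed

abbreviation round_start :: "(nat \<Rightarrow> nat) \<Rightarrow> nat \<Rightarrow> nat" where
  "round_start \<sigma> i \<equiv> \<sigma> (rounds round_end \<sigma> i)"

lemma potential_round_start_Suc_less:
  assumes \<sigma>: "\<And>t. t \<le> \<sigma> t" and halt: "rounds round_end \<sigma> (Suc i) < halt_time"
  shows "potential (cs (round_start \<sigma> (Suc i))) < potential (cs (round_start \<sigma> i))"
proof -
  have "round_end (round_start \<sigma> i) < halt_time" using halt by simp
  then obtain u where "round_start \<sigma> i \<le> u" "u < round_end (round_start \<sigma> i)" "as u \<in> active"
    by (rule active_in_round)
  then have "potential (cs (rounds round_end \<sigma> (Suc i))) < potential (cs (round_start \<sigma> i))"
    by (simp add: potential_less)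
  moreover have
    "potential (cs (round_start \<sigma> (Suc i))) \<le> potential (cs (rounds round_end \<sigma> (Suc i)))"
    using \<sigma> by (rule potential_antimono)
  ultimately show ?thesis by linarith
qed

lemma potential_round_start_strict_antimono:
  assumes \<sigma>: "\<And>t. t \<le> \<sigma> t" and "i < j" "rounds round_end \<sigma> j < halt_time"
  shows "potential (cs (round_start \<sigma> j)) < potential (cs (round_start \<sigma> i))"
  using assms(2,3)
proof (induction j)
  case (Suc j)
  have mono: "strict_mono (rounds round_end \<sigma>)"
    using less_round_end \<sigma> by (rule rounds_strict_mono)
  have step: "potential (cs (round_start \<sigma> (Suc j))) < potential (cs (round_start \<sigma> j))"
    using potential_round_start_Suc_less[OF \<sigma> Suc.prems(2)] .
  show ?case
  proof (cases "i = j")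
    case False
    have "rounds round_end \<sigma> j < halt_time"
      using Suc.prems(2) strict_monoD[OF mono, of j "Suc j"] by simp
    then show ?thesis using Suc False step by simp
  qed (use step in simp)
qed simp

text \<open>Before halting, the potential at the start of the rounds strictly decreases, so each
  value in \<open>[0, 2n]\<close> pays for at most one round.\<close>
lemma RT_exec_le:
  assumes \<sigma>: "\<And>t. t \<le> \<sigma> t" and V: "0 < V"
  shows "RT_exec V species rxns (\<lambda>_. NV rxns) \<sigma> decision cs as
    \<le> ennreal (real (2 * csize species (cs 0) + 1) * nrxns + 4 * real nres ^ 2 * V * nrxns)"
proof -
  define n where "n = csize species (cs 0)"
  define C where "C = {i. rounds round_end \<sigma> i < halt_time}"
  define p where "p i = nat (potential (cs (round_start \<sigma> i)))" for i
  have "strict_mono (rounds round_end \<sigma>)"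
    using less_round_end \<sigma> by (rule rounds_strict_mono)
  then have "i \<le> rounds round_end \<sigma> i" for i by (rule strict_mono_imp_increasing)
  then have "C \<subseteq> {..<halt_time}" unfolding C_def by (auto intro: le_less_trans)
  then have C: "finite C" by (rule finite_subset) simp
  have "inj_on p C"
  proof (rule inj_onI)
    fix i j assume "i \<in> C" "j \<in> C" "p i = p j"
    then show "i = j"
      using potential_round_start_strict_antimono[OF \<sigma>, of i j]
        potential_round_start_strict_antimono[OF \<sigma>, of j i] potential_nonneg
      unfolding C_def p_def by (metis linorder_neqE_nat mem_Collect_eq nat_eq_iff2 less_irrefl)
  qed
  moreover have "p i \<le> 2 * n" for i
    using potential_antimono[of 0 "round_start \<sigma> i"] potential_le_csize[of "cs 0"]
    unfolding p_def n_def by simp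
  ultimately have sum_le: "(\<Sum>i\<in>C. round_cost V (p i))
      \<le> real (2 * n + 1) * nrxns + 4 * real nres ^ 2 * V * nrxns"
    by (rule sum_round_cost_inj_le[OF V])
  have "rounds (\<lambda>te. tau ((\<lambda>_. NV rxns) (cs te)) cs as te) \<sigma> = rounds round_end \<sigma>"
    by (simp add: NV_rxns round_end_def[abs_def])
  then have "RT_exec V species rxns (\<lambda>_. NV rxns) \<sigma> decision cs as
      = (\<Sum>i\<in>C. TC V species rxns (\<lambda>_. NV rxns) (cs (round_start \<sigma> i)))"
    unfolding RT_exec_def Let_def halting_step_eq C_def
    by (subst suminf_finite[OF C[unfolded C_def]]) (auto intro: sum.cong)
  also have "\<dots> \<le> (\<Sum>i\<in>C. ennreal (round_cost V (p i)))"
    unfolding p_def by (intro sum_mono TC_le_round_cost V csize_run_ge_1)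
  also have "\<dots> = ennreal (\<Sum>i\<in>C. round_cost V (p i))"
    using round_cost_pos[OF V] by (intro sum_ennreal) (auto intro: less_imp_le)
  also have "\<dots> \<le> ennreal (real (2 * n + 1) * nrxns + 4 * real nres ^ 2 * V * nrxns)"
    using sum_le by (rule ennreal_leI)
  finally show ?thesis unfolding n_def .
qed

end

context mod_crd
begin

context
  fixes \<psi> :: "conf \<Rightarrow> bool"
  assumes \<psi>: "\<forall>x. supp_in Sig x \<longrightarrow> (\<psi> x \<longleftrightarrow> (\<Sum>s\<in>Sig. a s * int (x s)) mod m = b mod m)"
begin

lemma psi_restrict_to:
  "\<psi> (restrict_to Sig c) \<longleftrightarrow> (\<Sum>s\<in>Sig. a s * int (restrict_to Sig c s)) mod m = b mod m"
proof -
  have "supp_in Sig (restrict_to Sig c)" unfolding supp_in_def restrict_to_def by simp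
  then show ?thesis using \<psi> by blast
qed

lemma halting_decides_modulo: "halting_decides species rxns Sig no yes fuel \<psi>"
  unfolding halting_decides_def
proof (intro allI impI)
  fix x c0 cs as
  assume run: "valid_init species Sig fuel c0 \<and> restrict_to Sig c0 = x \<and> cs 0 = c0 \<and>
    execution rxns cs as \<and> weakly_fair rxns cs as"
  then interpret mod_run Sig a b m cs as by unfold_locales auto
  show "halts_into rxns (D no yes (\<psi> x)) cs"
    using halts_into_decision psi_restrict_to[of c0] run unfolding input_value_def by simp
qed

lemma RT_halt_le:
  assumes V: "0 < \<phi> n"
  shows "RT_halt \<phi> species rxns Sig no yes fuel \<psi> n
    \<le> ennreal (real (2 * n + 1) * nrxns + 4 * real nres ^ 2 * \<phi> n * nrxns)"
proof -
  let ?runs = "{(cs, as, \<sigma>). valid_init species Sig fuel (cs 0) \<and> csize species (cs 0) = n \<and>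
    execution rxns cs as \<and> weakly_fair rxns cs as \<and> (\<forall>t. t \<le> (\<sigma> :: nat \<Rightarrow> nat) t)}"
  have "RT_halt \<phi> species rxns Sig no yes fuel \<psi> n \<le>
    (SUP (cs, as, \<sigma>)\<in>?runs.
      RT_exec (\<phi> n) species rxns (\<lambda>_. NV rxns) \<sigma> (D no yes (\<psi> (restrict_to Sig (cs 0)))) cs as)"
    unfolding RT_halt_def by (intro INF_lower) simp
  also have "\<dots> \<le> ennreal (real (2 * n + 1) * nrxns + 4 * real nres ^ 2 * \<phi> n * nrxns)"
  proof (rule SUP_least)
    fix p assume "p \<in> ?runs"
    then obtain cs as and \<sigma> :: "nat \<Rightarrow> nat" where p: "p = (cs, as, \<sigma>)"
      and run: "valid_init species Sig fuel (cs 0)" "csize species (cs 0) = n" "execution rxns cs as" "weakly_fair rxns cs as" "\<forall>t. t \<le> \<sigma> t"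
      by (cases p) auto
    interpret mod_run Sig a b m cs as using run by unfold_locales auto
    have "RT_exec (\<phi> n) species rxns (\<lambda>_. NV rxns) \<sigma> (D no yes (\<psi> (restrict_to Sig (cs 0)))) cs as
        \<le> ennreal (real (2 * n + 1) * nrxns + 4 * real nres ^ 2 * \<phi> n * nrxns)"
      using RT_exec_le[OF _ V, of \<sigma>] run psi_restrict_to[of "cs 0"]
      unfolding input_value_def by simp
    then show "(case p of (cs, as, \<sigma>) \<Rightarrow>
        RT_exec (\<phi> n) species rxns (\<lambda>_. NV rxns) \<sigma> (D no yes (\<psi> (restrict_to Sig (cs 0)))) cs as)
      \<le> ennreal (real (2 * n + 1) * nrxns + 4 * real nres ^ 2 * \<phi> n * nrxns)"
      unfolding p by simp
  qed
  finally show ?thesis .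
qed

lemma RT_halt_le_linear:
  assumes V: "0 < \<phi> n" "\<phi> n \<le> C * real n" and n: "1 \<le> n"
  shows "RT_halt \<phi> species rxns Sig no yes fuel \<psi> n
    \<le> ennreal ((3 * nrxns + 4 * real nres ^ 2 * C * nrxns) * real n)"
proof -
  have "real (2 * n + 1) * nrxns \<le> 3 * real n * nrxns"
    using n nrxns_ge_1 by (intro mult_right_mono) auto
  moreover have "4 * real nres ^ 2 * \<phi> n * nrxns \<le> 4 * real nres ^ 2 * (C * real n) * nrxns"
    using V nrxns_ge_1 by (intro mult_right_mono mult_left_mono) auto
  ultimately have "real (2 * n + 1) * nrxns + 4 * real nres ^ 2 * \<phi> n * nrxns
      \<le> (3 * nrxns + 4 * real nres ^ 2 * C * nrxns) * real n"
    by (simp add: algebra_simps)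
  then show ?thesis using RT_halt_le[of \<phi> n, OF V(1)] order_trans ennreal_leI by blast
qed

end

end

theorem proposition5p4:
  fixes Sig :: "nat set" and \<psi> :: "conf \<Rightarrow> bool" and \<phi> :: "nat \<Rightarrow> real"
  assumes "finite Sig"
    and "modulo_predicate Sig \<psi>"
    and "\<forall>n. \<phi> n > 0"
    and "\<phi> \<in> \<Theta>(\<lambda>n. real n)"
  shows "\<exists>S R Y0 Y1 F. crd S R Sig Y0 Y1 F \<and> halting_decides S R Sig Y0 Y1 F \<psi> \<and>
           (\<exists>C::real. \<exists>N. \<forall>n\<ge>N. RT_halt \<phi> S R Sig Y0 Y1 F \<psi> n \<le> ennreal (C * real n))"
proof -
  obtain a b m where m: "0 < m"
    and \<psi>: "\<forall>x. supp_in Sig x \<longrightarrow> (\<psi> x \<longleftrightarrow> (\<Sum>s\<in>Sig. a s * int (x s)) mod m = b mod m)"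
    using assms(2) unfolding modulo_predicate_def by blast
  interpret mod_crd Sig a b m using assms(1) m by unfold_locales
  obtain C where "eventually (\<lambda>n. norm (\<phi> n) \<le> C * norm (real n)) at_top"
    using landau_o.bigE[OF bigthetaD1[OF assms(4)]] by blast
  then obtain N where N: "\<And>n. N \<le> n \<Longrightarrow> \<phi> n \<le> C * real n"
    using assms(3) unfolding eventually_at_top_linorder
    by (metis abs_of_pos real_norm_def of_nat_0_le_iff abs_of_nonneg)
  have "RT_halt \<phi> species rxns Sig no yes fuel \<psi> n
      \<le> ennreal ((3 * nrxns + 4 * real nres ^ 2 * C * nrxns) * real n)" if "max N 1 \<le> n" for n
    using that assms(3) N by (intro RT_halt_le_linear[OF \<psi>]) auto
  then show ?thesis using crd_rxns halting_decides_modulo[OF \<psi>] by blast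
qed

end
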